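(* Let $\mathcal{A}$ be a complex Banach algebra with unity and let $a\in\mathcal{A}$. If $x\in\mathcal{A}$ is a g$\pi$-Hirano inverse of $a$, then $a$ is generalized Drazin invertible and its generalized Drazin inverse is $a^{d}=x$.
   Context: An element $q\in\mathcal{A}$ is quasinilpotent if its spectrum is $\sigma(q)=\{0\}$; $\mathcal{A}^{qnil}$ denotes the set of quasinilpotent elements. An element $x\in\mathcal{A}$ is a generalized Drazin inverse of $a$ if $xax=x$, $ax=xa$ and $a-a^{2}x\in\mathcal{A}^{qnil}$; it is unique when it exists and is denoted $a^{d}$. An element $x\in\mathcal{A}$ is a g$\pi$-Hirano inverse of $a$ if $xax=x$, $ax=xa$ and $a-a^{n+2}x\in\mathcal{A}^{qnil}$ for some positive integer $n$. *)

theory Defs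
  imports "HOL-Analysis.Analysis"
begin

class complex_banach_algebra_1 = real_normed_algebra_1 + banach +
  fixes scaleC :: "complex \<Rightarrow> 'a \<Rightarrow> 'a"
  assumes scaleC_add_right: "scaleC c (x + y) = scaleC c x + scaleC c y"
    and scaleC_add_left: "scaleC (c + d) x = scaleC c x + scaleC d x"
    and scaleC_scaleC: "scaleC c (scaleC d x) = scaleC (c * d) x"
    and scaleC_one: "scaleC 1 x = x"
    and scaleR_scaleC: "scaleR r x = scaleC (complex_of_real r) x"
    and mult_scaleC_left: "scaleC c x * y = scaleC c (x * y)"
    and mult_scaleC_right: "x * scaleC c y = scaleC c (x * y)"
    and norm_scaleC: "norm (scaleC c x) = cmod c * norm x"

definition invertible_elem :: "'a::monoid_mult \<Rightarrow> bool" where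
  "invertible_elem x \<longleftrightarrow> (\<exists>y. x * y = 1 \<and> y * x = 1)"

definition spectrum :: "'a::complex_banach_algebra_1 \<Rightarrow> complex set" where
  "spectrum a = {z. \<not> invertible_elem (a - scaleC z 1)}"

definition quasinilpotent :: "'a::complex_banach_algebra_1 \<Rightarrow> bool" where
  "quasinilpotent q \<longleftrightarrow> spectrum q = {0}"

definition is_gd_inverse :: "'a::complex_banach_algebra_1 \<Rightarrow> 'a \<Rightarrow> bool" where
  "is_gd_inverse a x \<longleftrightarrow> x * a * x = x \<and> a * x = x * a \<and> quasinilpotent (a - a^2 * x)"

definition gd_invertible :: "'a::complex_banach_algebra_1 \<Rightarrow> bool" where
  "gd_invertible a \<longleftrightarrow> (\<exists>x. is_gd_inverse a x)"

definition gd_inverse :: "'a::complex_banach_algebra_1 \<Rightarrow> 'a" where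
  "gd_inverse a = (THE x. is_gd_inverse a x)"

definition is_gpi_hirano_inverse :: "'a::complex_banach_algebra_1 \<Rightarrow> 'a \<Rightarrow> bool" where
  "is_gpi_hirano_inverse a x \<longleftrightarrow> x * a * x = x \<and> a * x = x * a \<and>
     (\<exists>n::nat. n \<ge> 1 \<and> quasinilpotent (a - a^(n+2) * x))"

end

(*
  With p = ax, the idempotent p commutes with u = a - a^(n+2) x, and a - a^2 x = u(1 - p) is
  the compression of u to the corner 1 - p; such a compression of a quasinilpotent is again
  quasinilpotent, so x is a generalized Drazin inverse of a.

  Uniqueness: if y is another one and N = a - a^2 y, then ax(1 - ay) = x^k N^k for all k >= 1,
  so ||ax(1 - ay)|| <= ||x||^k ||N^k||.  For quasinilpotent N the quantity rho^k ||N^k|| stays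
  bounded along k = 2^m for every rho: the function (1 - zN)^-1 is defined and locally Lipschitz
  on the whole plane, and its mean over the 2^m points z w with w^(2^m) = 1 is
  (1 - z^(2^m) N^(2^m))^-1, which lets one push the radius of boundedness outwards in steps of
  fixed size.  Hence ax(1 - ay) = 0 and symmetrically (1 - ax)ay = 0, so ax = ay and x = y.
*)

theory Submission
  imports Defs
begin

lemma scaleC_zero_left [simp]: "scaleC 0 (x::'a::complex_banach_algebra_1) = 0"
  using scaleC_add_left[of 0 0 x] by simp

lemma scaleC_minus_left: "scaleC (- c) (x::'a::complex_banach_algebra_1) = - scaleC c x"
  using scaleC_add_left[of "- c" c x] by (simp add: eq_neg_iff_add_eq_0)

lemma scaleC_one_mult: "scaleC c 1 * (y::'a::complex_banach_algebra_1) = scaleC c y"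
  by (simp add: mult_scaleC_left)

lemma scaleC_one_commute: "scaleC c 1 * (y::'a::complex_banach_algebra_1) = y * scaleC c 1"
  by (simp add: mult_scaleC_left mult_scaleC_right)

lemma scaleC_one_mult_distrib:
  "scaleC (c * d) (1::'a::complex_banach_algebra_1) = scaleC c 1 * scaleC d 1"
  by (simp add: scaleC_one_mult scaleC_scaleC)

lemma scaleC_one_diff:
  "scaleC (c - d) (1::'a::complex_banach_algebra_1) = scaleC c 1 - scaleC d 1"
  using scaleC_add_left[of "c - d" d "1::'a"] by (simp add: eq_diff_eq)

lemma norm_scaleC_one_mult: "norm (scaleC c 1 * (y::'a::complex_banach_algebra_1)) = cmod c * norm y"
  by (simp add: scaleC_one_mult norm_scaleC)

lemma invertible_elem_mult:
  fixes u v :: "'a::monoid_mult"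
  assumes "invertible_elem u" "invertible_elem v"
  shows "invertible_elem (u * v)"
proof -
  obtain u' v' where "u * u' = 1" "u' * u = 1" "v * v' = 1" "v' * v = 1"
    using assms unfolding invertible_elem_def by blast
  then have "u * v * (v' * u') = 1" "v' * u' * (u * v) = 1"
    by (metis mult.assoc mult_1_left)+
  then show ?thesis unfolding invertible_elem_def by blast
qed

lemma invertible_elem_scaleC_one:
  "c \<noteq> 0 \<Longrightarrow> invertible_elem (scaleC c (1::'a::complex_banach_algebra_1))"
  unfolding invertible_elem_def
  by (metis scaleC_one_commute scaleC_one_mult_distrib right_inverse scaleC_one)

lemma inverse_commute:
  fixes y v p :: "'a::monoid_mult"
  assumes "y * v = 1" "v * y = 1" "y * p = p * y"
  shows "v * p = p * v"
  by (metis assms mult.assoc mult_1_left mult_1_right)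

lemma invertible_elem_corners:
  fixes y w p :: "'a::ring_1"
  assumes y: "invertible_elem y" and w: "invertible_elem w" and p: "p * p = p"
    and yp: "y * p = p * y" and wp: "w * p = p * w"
  shows "invertible_elem (y * (1 - p) + w * p)"
proof -
  obtain y' w' where y': "y * y' = 1" "y' * y = 1" and w': "w * w' = 1" "w' * w = 1"
    using y w unfolding invertible_elem_def by blast
  have y'p: "y' * p = p * y'" and w'p: "w' * p = p * w'"
    using inverse_commute y' w' yp wp by blast+
  have corners: "(u * (1 - p) + v * p) * (u' * (1 - p) + v' * p) = u * u' * (1 - p) + v * v' * p"
    if "u' * p = p * u'" "v' * p = p * v'" for u v u' v'
  proof -
    define e where "e = 1 - p"
    have "e * u' = u' * e" "p * v' = v' * p" using that unfolding e_def by (simp_all add: algebra_simps)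
    moreover have "e * e = e" "e * p = 0" "p * e = 0"
      using p unfolding e_def by (simp_all add: algebra_simps)
    ultimately have "u * e * (u' * e) = u * u' * e" "u * e * (v' * p) = 0"
      "v * p * (u' * e) = 0" "v * p * (v' * p) = v * v' * p"
      by (metis mult.assoc mult_zero_left mult_zero_right p)+
    then show ?thesis unfolding e_def[symmetric] by (simp add: distrib_left distrib_right)
  qed
  have "(y * (1 - p) + w * p) * (y' * (1 - p) + w' * p) = 1"
    "(y' * (1 - p) + w' * p) * (y * (1 - p) + w * p) = 1"
    using corners[OF y'p w'p, of y w] corners[OF yp wp, of y' w'] y' w' by simp_all
  then show ?thesis unfolding invertible_elem_def by blast
qed

section \<open>Quasinilpotent elements\<close>

lemma quasinilpotent_invertible_diff:
  "quasinilpotent (N::'a::complex_banach_algebra_1) \<Longrightarrow> z \<noteq> 0 \<Longrightarrow> invertible_elem (N - scaleC z 1)"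
  unfolding quasinilpotent_def spectrum_def by auto

lemma quasinilpotent_not_invertible:
  "quasinilpotent (N::'a::complex_banach_algebra_1) \<Longrightarrow> \<not> invertible_elem N"
  unfolding quasinilpotent_def spectrum_def by (metis diff_zero insertI1 mem_Collect_eq scaleC_zero_left)

lemma quasinilpotentI:
  fixes q :: "'a::complex_banach_algebra_1"
  assumes "\<And>z. z \<noteq> 0 \<Longrightarrow> invertible_elem (q - scaleC z 1)" and "\<not> invertible_elem q"
  shows "quasinilpotent q"
proof -
  have "z \<in> spectrum q \<longleftrightarrow> z = 0" for z
    using assms unfolding spectrum_def by (cases "z = 0") simp_all
  then show ?thesis unfolding quasinilpotent_def by blast
qed

lemma quasinilpotent_invertible_one_minus:
  fixes N :: "'a::complex_banach_algebra_1"
  assumes N: "quasinilpotent N"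
  shows "invertible_elem (1 - scaleC z 1 * N)"
proof (cases "z = 0")
  case True
  then show ?thesis by (simp add: invertible_elem_def)
next
  case False
  have "scaleC (- z) 1 * (N - scaleC (inverse z) 1) = scaleC (- z) 1 * N - scaleC (- z * inverse z) 1"
    by (simp only: right_diff_distrib scaleC_one_mult_distrib)
  also have "\<dots> = 1 - scaleC z 1 * N"
    using False by (simp add: scaleC_minus_left scaleC_one)
  finally have "1 - scaleC z 1 * N = scaleC (- z) 1 * (N - scaleC (inverse z) 1)" ..
  moreover have "invertible_elem (scaleC (- z) (1::'a))"
    using False by (simp add: invertible_elem_scaleC_one)
  moreover have "invertible_elem (N - scaleC (inverse z) 1)"
    using False by (simp add: quasinilpotent_invertible_diff N)
  ultimately show ?thesis by (simp add: invertible_elem_mult)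
qed

lemma quasinilpotent_mult_complement:
  fixes u p :: "'a::complex_banach_algebra_1"
  assumes u: "quasinilpotent u" and p: "p * p = p" and up: "u * p = p * u"
  shows "quasinilpotent (u * (1 - p))"
proof (rule quasinilpotentI)
  fix z :: complex
  assume z: "z \<noteq> 0"
  have split: "u * (1 - p) - scaleC z 1 = (u - scaleC z 1) * (1 - p) + scaleC (- z) 1 * p"
    by (simp add: left_diff_distrib right_diff_distrib scaleC_minus_left)
  have up': "(u - scaleC z 1) * p = p * (u - scaleC z 1)"
    using up by (simp add: left_diff_distrib right_diff_distrib scaleC_one_commute[of z p])
  have "invertible_elem ((u - scaleC z 1) * (1 - p) + scaleC (- z) 1 * p)"
    using z by (intro invertible_elem_corners quasinilpotent_invertible_diff u invertible_elem_scaleC_one p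
        up' scaleC_one_commute) simp_all
  then show "invertible_elem (u * (1 - p) - scaleC z 1)" by (simp only: split)
next
  show "\<not> invertible_elem (u * (1 - p))"
  proof
    assume "invertible_elem (u * (1 - p))"
    then obtain v where v: "v * (u * (1 - p)) = 1" unfolding invertible_elem_def by blast
    have "p = v * (u * (1 - p)) * p" using v by simp
    also have "\<dots> = v * u * ((1 - p) * p)" by (simp only: mult.assoc)
    finally have "p = 0" using p by (simp add: left_diff_distrib)
    then show False using \<open>invertible_elem (u * (1 - p))\<close> quasinilpotent_not_invertible[OF u] by simp
  qed
qed

section \<open>The resolvent of a quasinilpotent element\<close>

definition inverse_elem :: "'a::monoid_mult \<Rightarrow> 'a" where
  "inverse_elem u = (SOME v. u * v = 1 \<and> v * u = 1)"

lemma inverse_elem: "invertible_elem u \<Longrightarrow> u * inverse_elem u = 1 \<and> inverse_elem u * u = 1"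
  unfolding invertible_elem_def inverse_elem_def by (rule someI_ex)

text \<open>The resolvent in the variable z = 1/\<lambda>, i.e. (1 - zN)^-1 = \<lambda>(\<lambda> - N)^-1;
  for quasinilpotent N it is defined on the whole plane.\<close>

definition resolvent :: "'a::complex_banach_algebra_1 \<Rightarrow> complex \<Rightarrow> 'a" where
  "resolvent N z = inverse_elem (1 - scaleC z 1 * N)"

context
  fixes N :: "'a::complex_banach_algebra_1"
  assumes N: "quasinilpotent N"
begin

lemma resolvent_left: "resolvent N z * (1 - scaleC z 1 * N) = 1"
  and resolvent_right: "(1 - scaleC z 1 * N) * resolvent N z = 1"
  unfolding resolvent_def using inverse_elem quasinilpotent_invertible_one_minus[OF N] by blast+

lemma resolvent_diff:
  "resolvent N w - resolvent N z = resolvent N z * (scaleC (w - z) 1 * N) * resolvent N w"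
proof -
  have "scaleC (w - z) 1 * N = (1 - scaleC z 1 * N) - (1 - scaleC w 1 * N)"
    by (simp add: scaleC_one_diff left_diff_distrib)
  then have "resolvent N z * (scaleC (w - z) 1 * N) * resolvent N w
      = resolvent N z * (1 - scaleC z 1 * N) * resolvent N w
        - resolvent N z * ((1 - scaleC w 1 * N) * resolvent N w)"
    by (simp only: right_diff_distrib left_diff_distrib mult.assoc)
  then show ?thesis by (simp add: resolvent_left resolvent_right)
qed

lemma norm_resolvent_diff_le:
  "norm (resolvent N w - resolvent N z)
    \<le> cmod (w - z) * norm N * norm (resolvent N z) * norm (resolvent N w)"
proof -
  have "norm (resolvent N w - resolvent N z)
      \<le> norm (resolvent N z) * norm (scaleC (w - z) 1 * N) * norm (resolvent N w)"
    unfolding resolvent_diff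
    by (meson norm_mult_ineq mult_right_mono norm_ge_zero order_trans)
  then show ?thesis by (simp add: norm_scaleC_one_mult mult_ac)
qed

lemma norm_resolvent_le_twice:
  assumes "cmod (w - z) * norm N * norm (resolvent N z) \<le> 1/2"
  shows "norm (resolvent N w) \<le> 2 * norm (resolvent N z)"
proof -
  have "norm (resolvent N w) \<le> norm (resolvent N z) + norm (resolvent N w - resolvent N z)"
    by (metis add.commute diff_add_cancel norm_triangle_ineq)
  also have "\<dots> \<le> norm (resolvent N z) + 1/2 * norm (resolvent N w)"
    using norm_resolvent_diff_le[of w z] mult_right_mono[OF assms norm_ge_zero, of "resolvent N w"]
    by simp
  finally show ?thesis by linarith
qed

lemma isCont_resolvent: "isCont (resolvent N) z"
proof -
  let ?K = "2 * norm N * norm (resolvent N z) ^ 2"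
  have "((\<lambda>w. cmod (w - z) * norm N * norm (resolvent N z)) \<longlongrightarrow> 0) (at z)"
    by (intro tendsto_eq_intros) auto
  then have "\<forall>\<^sub>F w in at z. cmod (w - z) * norm N * norm (resolvent N z) < 1/2"
    by (rule order_tendstoD) simp
  then have "\<forall>\<^sub>F w in at z. norm (resolvent N w - resolvent N z) \<le> cmod (w - z) * ?K"
  proof (rule eventually_mono)
    fix w
    assume "cmod (w - z) * norm N * norm (resolvent N z) < 1/2"
    then have "norm (resolvent N w) \<le> 2 * norm (resolvent N z)"
      by (intro norm_resolvent_le_twice) simp
    then have "cmod (w - z) * norm N * norm (resolvent N z) * norm (resolvent N w)
        \<le> cmod (w - z) * norm N * norm (resolvent N z) * (2 * norm (resolvent N z))"
      by (rule mult_left_mono) simp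
    then show "norm (resolvent N w - resolvent N z) \<le> cmod (w - z) * ?K"
      using norm_resolvent_diff_le[of w z] by (simp add: power2_eq_square mult_ac)
  qed
  moreover have "((\<lambda>w. cmod (w - z) * ?K) \<longlongrightarrow> 0) (at z)"
    by (intro tendsto_eq_intros) auto
  ultimately have "((\<lambda>w. resolvent N w - resolvent N z) \<longlongrightarrow> 0) (at z)"
    by (rule Lim_null_comparison)
  then show ?thesis unfolding isCont_def by (rule LIM_zero_cancel)
qed

lemma resolvent_lipschitz_on_cball: "\<exists>L>0. L-lipschitz_on (cball 0 r) (resolvent N)"
proof -
  have "compact (resolvent N ` cball 0 r)"
    using isCont_resolvent by (intro compact_continuous_image continuous_at_imp_continuous_on) auto
  then have "bounded (resolvent N ` cball 0 r)" by (rule compact_imp_bounded)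
  then obtain M where "M > 0" and "\<forall>y \<in> resolvent N ` cball 0 r. norm y \<le> M"
    unfolding bounded_pos by blast
  then have M: "\<And>z. z \<in> cball 0 r \<Longrightarrow> norm (resolvent N z) \<le> M" by blast
  define L where "L = norm N * M * M + 1"
  have "0 \<le> norm N * M * M" using \<open>M > 0\<close> by (intro mult_nonneg_nonneg) auto
  then have "L > 0" unfolding L_def by linarith
  have "L-lipschitz_on (cball 0 r) (resolvent N)"
  proof (rule lipschitz_onI)
    fix w z :: complex
    assume "w \<in> cball 0 r" "z \<in> cball 0 r"
    then have "norm N * norm (resolvent N z) * norm (resolvent N w) \<le> norm N * M * M"
      using M \<open>M > 0\<close> by (intro mult_mono) auto
    also have "\<dots> \<le> L" unfolding L_def by simp
    finally have "cmod (w - z) * (norm N * norm (resolvent N z) * norm (resolvent N w)) \<le> cmod (w - z) * L"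
      by (rule mult_left_mono) simp
    then show "dist (resolvent N w) (resolvent N z) \<le> L * dist w z"
      using norm_resolvent_diff_le[of w z] by (simp add: dist_norm mult_ac)
  qed (use \<open>L > 0\<close> in simp)
  with \<open>L > 0\<close> show ?thesis by blast
qed

end

section \<open>Dyadic means of the resolvent\<close>

definition zeta :: "nat \<Rightarrow> complex" where
  "zeta m = exp (\<i> * of_real (pi / 2 ^ m))"

lemma zeta_power: "zeta m ^ 2 ^ m = - 1"
proof -
  have "zeta m ^ 2 ^ m = exp (of_nat (2 ^ m) * (\<i> * of_real (pi / 2 ^ m)))"
    unfolding zeta_def by (rule exp_of_nat_mult[symmetric])
  also have "of_nat (2 ^ m) * (\<i> * of_real (pi / 2 ^ m)) = of_real pi * \<i>"
    by simp
  finally show ?thesis by (simp add: exp_pi_i)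
qed

lemma norm_zeta [simp]: "cmod (zeta m) = 1"
  unfolding zeta_def by (rule norm_exp_i_times)

text \<open>dyadic_mean N m z is the mean of the resolvent over the 2^m points z \<omega> with
  \<omega>^(2^m) = 1; averaging kills all powers of zN not divisible by 2^m.\<close>

fun dyadic_mean :: "'a::complex_banach_algebra_1 \<Rightarrow> nat \<Rightarrow> complex \<Rightarrow> 'a" where
  "dyadic_mean N 0 z = resolvent N z"
| "dyadic_mean N (Suc m) z = scaleC (1/2) 1 * (dyadic_mean N m z + dyadic_mean N m (zeta m * z))"

lemma dyadic_mean_left:
  fixes N :: "'a::complex_banach_algebra_1"
  assumes N: "quasinilpotent N"
  shows "dyadic_mean N m z * (1 - scaleC (z ^ 2 ^ m) 1 * N ^ 2 ^ m) = 1"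
proof (induction m arbitrary: z)
  case 0
  then show ?case using resolvent_left[OF N] by simp
next
  case (Suc m)
  define X where "X = scaleC (z ^ 2 ^ m) 1 * N ^ 2 ^ m"
  have minus: "(zeta m * z) ^ 2 ^ m = - (z ^ 2 ^ m)"
    by (simp add: power_mult_distrib zeta_power)
  have inv: "dyadic_mean N m z * (1 - X) = 1" "dyadic_mean N m (zeta m * z) * (1 + X) = 1"
    using Suc[of z] Suc[of "zeta m * z"] unfolding minus X_def by (simp_all add: scaleC_minus_left)
  have XX: "X * X = scaleC (z ^ 2 ^ Suc m) 1 * N ^ 2 ^ Suc m"
  proof -
    have "X * X = scaleC (z ^ 2 ^ m) 1 * (N ^ 2 ^ m * scaleC (z ^ 2 ^ m) 1) * N ^ 2 ^ m"
      unfolding X_def by (simp only: mult.assoc)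
    also have "\<dots> = scaleC (z ^ 2 ^ m) 1 * scaleC (z ^ 2 ^ m) 1 * (N ^ 2 ^ m * N ^ 2 ^ m)"
      by (simp only: scaleC_one_commute[of "z ^ 2 ^ m" "N ^ 2 ^ m", symmetric] mult.assoc)
    finally show ?thesis
      by (simp only: power_add mult_2 power_Suc scaleC_one_mult_distrib)
  qed
  have "1 - X * X = (1 - X) * (1 + X)" "1 - X * X = (1 + X) * (1 - X)"
    by (simp_all add: algebra_simps)
  then have "dyadic_mean N (Suc m) z * (1 - X * X)
      = scaleC (1/2) 1 * (dyadic_mean N m z * (1 - X) * (1 + X)
          + dyadic_mean N m (zeta m * z) * (1 + X) * (1 - X))"
    by (metis dyadic_mean.simps(2) distrib_right mult.assoc)
  also have "\<dots> = scaleC (1/2) 1 * (1 + 1)"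
    unfolding inv by simp
  also have "\<dots> = scaleC (1/2 + 1/2) 1"
    by (simp only: distrib_left mult_1_right scaleC_add_left)
  finally show ?case unfolding XX by (simp add: scaleC_one)
qed

lemma norm_dyadic_mean_diff_le:
  assumes "\<And>w. cmod w = r \<Longrightarrow> norm (resolvent N w - resolvent N (t * w)) \<le> \<epsilon>" and "cmod z = r"
  shows "norm (dyadic_mean N m z - dyadic_mean N m (t * z)) \<le> \<epsilon>"
  using assms(2)
proof (induction m arbitrary: z)
  case 0
  then show ?case using assms(1) by simp
next
  case (Suc m)
  have "dyadic_mean N (Suc m) z - dyadic_mean N (Suc m) (t * z)
      = scaleC (1/2) 1 * ((dyadic_mean N m z - dyadic_mean N m (t * z))
          + (dyadic_mean N m (zeta m * z) - dyadic_mean N m (t * (zeta m * z))))"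
    by (simp add: algebra_simps)
  moreover have "norm (dyadic_mean N m z - dyadic_mean N m (t * z)) \<le> \<epsilon>"
    "norm (dyadic_mean N m (zeta m * z) - dyadic_mean N m (t * (zeta m * z))) \<le> \<epsilon>"
    using Suc by (simp_all add: norm_mult)
  ultimately show ?case
    by (simp add: norm_scaleC_one_mult) (smt (verit) norm_triangle_ineq)
qed

section \<open>Growth of the dyadic powers of a quasinilpotent element\<close>

lemma tendsto_power_two_power_zero:
  fixes q :: real
  assumes "0 \<le> q" "q < 1"
  shows "(\<lambda>m. q ^ 2 ^ m) \<longlonglongrightarrow> 0"
proof -
  have "strict_mono (\<lambda>m::nat. (2::nat) ^ m)"
    by (rule strict_monoI) simp
  then have "((\<lambda>n. q ^ n) \<circ> (\<lambda>m. 2 ^ m)) \<longlonglongrightarrow> 0"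
    using assms by (intro LIMSEQ_subseq_LIMSEQ LIMSEQ_power_zero) auto
  then show ?thesis by (simp add: o_def)
qed

lemma norm_left_inverse_diff_one_le:
  fixes S W :: "'a::real_normed_algebra_1"
  assumes inv: "S * (1 - W) = 1" and W: "norm W \<le> 1/16"
  shows "norm (S - 1) \<le> 1/8"
proof -
  have diff: "S - 1 = S * W" using inv by (simp add: algebra_simps)
  have SW: "norm (S * W) \<le> norm S * (1/16)"
    using norm_mult_ineq[of S W] mult_left_mono[OF W norm_ge_zero[of S]] by linarith
  have "norm S \<le> norm (1::'a) + norm (S - 1)"
    by (metis add.commute diff_add_cancel norm_triangle_ineq)
  then have "norm S \<le> 16/15" using diff SW by simp
  then show ?thesis using diff SW by simp
qed

lemma norm_le_of_left_inverse_near_one: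
  fixes S T :: "'a::real_normed_algebra_1"
  assumes inv: "S * (1 - T) = 1" and S: "norm (S - 1) \<le> 1/4"
  shows "norm T \<le> 1/3"
proof -
  have "T = (S - 1) - (S - 1) * T" using inv by (simp add: algebra_simps)
  then have "norm T \<le> norm (S - 1) + norm ((S - 1) * T)"
    by (metis norm_triangle_ineq4)
  also have "\<dots> \<le> norm (S - 1) + norm (S - 1) * norm T"
    by (rule add_left_mono[OF norm_mult_ineq])
  also have "\<dots> \<le> 1/4 + 1/4 * norm T"
    using S by (intro add_mono mult_right_mono) auto
  finally show ?thesis by simp
qed

text \<open>Holding for every \<rho> is the statement that the spectral radius of N is 0, read along the
  subsequence of powers 2^m.\<close>

definition dyadic_power_bounded :: "'a::real_normed_algebra_1 \<Rightarrow> real \<Rightarrow> bool" where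
  "dyadic_power_bounded N \<rho> \<longleftrightarrow> (\<exists>C. \<forall>\<^sub>F m in sequentially. \<rho> ^ 2 ^ m * norm (N ^ 2 ^ m) \<le> C)"

lemma dyadic_power_bounded_mono:
  assumes "dyadic_power_bounded N \<rho>" "0 \<le> \<rho>'" "\<rho>' \<le> \<rho>"
  shows "dyadic_power_bounded N \<rho>'"
proof -
  obtain C where C: "\<forall>\<^sub>F m in sequentially. \<rho> ^ 2 ^ m * norm (N ^ 2 ^ m) \<le> C"
    using assms(1) unfolding dyadic_power_bounded_def by blast
  have le: "\<rho>' ^ 2 ^ m * norm (N ^ 2 ^ m) \<le> \<rho> ^ 2 ^ m * norm (N ^ 2 ^ m)" for m
    using assms(2,3) by (intro mult_right_mono power_mono) auto
  have "\<forall>\<^sub>F m in sequentially. \<rho>' ^ 2 ^ m * norm (N ^ 2 ^ m) \<le> C"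
    using C by (rule eventually_mono) (rule order_trans[OF le])
  then show ?thesis unfolding dyadic_power_bounded_def by blast
qed

lemma dyadic_power_bounded_inverse_norm: "dyadic_power_bounded N (1 / (norm N + 1))"
proof -
  define \<rho> where "\<rho> = 1 / (norm N + 1)"
  have "\<rho> \<ge> 0" "\<rho> * norm N \<le> 1"
    unfolding \<rho>_def by (simp_all add: field_simps add_pos_nonneg)
  have "\<rho> ^ 2 ^ m * norm (N ^ 2 ^ m) \<le> 1" for m
  proof -
    have "\<rho> ^ 2 ^ m * norm (N ^ 2 ^ m) \<le> \<rho> ^ 2 ^ m * norm N ^ 2 ^ m"
      using \<open>\<rho> \<ge> 0\<close> by (intro mult_left_mono norm_power_ineq) simp
    also have "\<dots> = (\<rho> * norm N) ^ 2 ^ m" by (simp add: power_mult_distrib)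
    also have "\<dots> \<le> 1" using \<open>\<rho> \<ge> 0\<close> \<open>\<rho> * norm N \<le> 1\<close> by (intro power_le_one) simp_all
    finally show ?thesis .
  qed
  then show ?thesis
    unfolding dyadic_power_bounded_def \<rho>_def [symmetric] by (intro exI always_eventually allI)
qed

lemma norm_resolvent_diff_radial_le:
  fixes N :: "'a::complex_banach_algebra_1"
  assumes L: "L-lipschitz_on (cball 0 r) (resolvent N)" and t: "0 \<le> t" "t \<le> 1" and w: "cmod w = r"
  shows "norm (resolvent N w - resolvent N (of_real t * w)) \<le> L * ((1 - t) * r)"
proof -
  have "w - of_real t * w = of_real (1 - t) * w" by (simp add: algebra_simps)
  then have "cmod (w - of_real t * w) = cmod (of_real (1 - t) :: complex) * cmod w"
    by (simp only: norm_mult)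
  moreover have "cmod (of_real (1 - t) :: complex) = 1 - t" using t by (subst norm_of_real) simp
  ultimately have "cmod (w - of_real t * w) = (1 - t) * r" using w by (simp only:)
  moreover have "w \<in> cball 0 r" "of_real t * w \<in> cball 0 r"
    using t w norm_ge_zero[of w] by (simp_all add: norm_mult mult_left_le_one_le)
  ultimately show ?thesis using lipschitz_on_normD[OF L] by metis
qed

text \<open>On the inner circle |z| = \<rho> - \<delta> the hypothesis makes z^(2^m) N^(2^m) small, so the dyadic
  mean there is close to 1; the Lipschitz bound carries this over to the outer circle
  |z| = \<rho> + \<delta>, where the mean inverts 1 - z^(2^m) N^(2^m).\<close>

lemma dyadic_power_bounded_step:
  fixes N :: "'a::complex_banach_algebra_1"
  assumes N: "quasinilpotent N" and L: "L-lipschitz_on (cball 0 (\<rho> + \<delta>)) (resolvent N)"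
    and \<delta>: "0 < \<delta>" "2 * \<delta> \<le> \<rho>" "16 * \<delta> * L \<le> 1" and bounded: "dyadic_power_bounded N \<rho>"
  shows "dyadic_power_bounded N (\<rho> + \<delta>)"
proof -
  define t where "t = (\<rho> - \<delta>) / (\<rho> + \<delta>)"
  define z where "z = complex_of_real (\<rho> + \<delta>)"
  have t: "0 \<le> t" "t \<le> 1" "t * (\<rho> + \<delta>) = \<rho> - \<delta>"
    using \<delta> by (simp_all add: t_def)
  then have tz: "of_real t * z = of_real (\<rho> - \<delta>)"
    unfolding z_def by (metis of_real_mult)
  have z: "cmod z = \<rho> + \<delta>" using \<delta> by (simp add: z_def del: of_real_add)
  have near: "norm (dyadic_mean N m z - dyadic_mean N m (of_real t * z)) \<le> 1/8" for m
  proof (rule norm_dyadic_mean_diff_le)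
    fix w assume "cmod w = \<rho> + \<delta>"
    then have "norm (resolvent N w - resolvent N (of_real t * w)) \<le> L * ((1 - t) * (\<rho> + \<delta>))"
      by (rule norm_resolvent_diff_radial_le[OF L t(1,2)])
    also have "(1 - t) * (\<rho> + \<delta>) = 2 * \<delta>" using \<delta> by (simp add: t_def field_simps)
    also have "L * (2 * \<delta>) \<le> 1/8" using \<delta>(3) by (simp add: algebra_simps)
    finally show "norm (resolvent N w - resolvent N (of_real t * w)) \<le> 1/8" .
  qed (rule z)
  obtain C where C: "\<forall>\<^sub>F m in sequentially. \<rho> ^ 2 ^ m * norm (N ^ 2 ^ m) \<le> C"
    using bounded unfolding dyadic_power_bounded_def by blast
  define q where "q = (\<rho> - \<delta>) / \<rho>"
  have q: "0 \<le> q" "q < 1" "\<rho> - \<delta> = q * \<rho>" "0 < \<rho>" using \<delta> by (simp_all add: q_def)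
  have "(\<lambda>m. q ^ 2 ^ m * C) \<longlonglongrightarrow> 0"
    using q by (intro tendsto_mult_left_zero tendsto_power_two_power_zero)
  then have "\<forall>\<^sub>F m in sequentially. q ^ 2 ^ m * C < 1/16"
    by (rule order_tendstoD) simp
  with C have "\<forall>\<^sub>F m in sequentially. (\<rho> + \<delta>) ^ 2 ^ m * norm (N ^ 2 ^ m) \<le> 1/3"
  proof eventually_elim
    case (elim m)
    have "norm (scaleC ((of_real t * z) ^ 2 ^ m) 1 * N ^ 2 ^ m) = q ^ 2 ^ m * (\<rho> ^ 2 ^ m * norm (N ^ 2 ^ m))"
      using \<delta> q unfolding tz by (simp add: norm_scaleC_one_mult norm_mult norm_power power_mult_distrib)
    also have "\<dots> \<le> q ^ 2 ^ m * C" using elim q by (intro mult_left_mono) simp_all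
    finally have "norm (dyadic_mean N m (of_real t * z) - 1) \<le> 1/8"
      using elim by (intro norm_left_inverse_diff_one_le[OF dyadic_mean_left[OF N]]) simp
    with near[of m] have "norm ((dyadic_mean N m z - dyadic_mean N m (of_real t * z))
        + (dyadic_mean N m (of_real t * z) - 1)) \<le> 1/4"
      by (intro norm_triangle_le) linarith
    then have "norm (dyadic_mean N m z - 1) \<le> 1/4" by simp
    then have "norm (scaleC (z ^ 2 ^ m) 1 * N ^ 2 ^ m) \<le> 1/3"
      by (rule norm_le_of_left_inverse_near_one[OF dyadic_mean_left[OF N]])
    then show ?case by (simp add: z norm_scaleC_one_mult norm_power)
  qed
  then show ?thesis unfolding dyadic_power_bounded_def by blast
qed

lemma quasinilpotent_dyadic_power_bounded:
  fixes N :: "'a::complex_banach_algebra_1"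
  assumes N: "quasinilpotent N" and "0 \<le> \<rho>"
  shows "dyadic_power_bounded N \<rho>"
proof -
  obtain L where "L > 0" and L: "L-lipschitz_on (cball 0 (\<rho> + 1)) (resolvent N)"
    using resolvent_lipschitz_on_cball[OF N] by blast
  define \<rho>\<^sub>0 where "\<rho>\<^sub>0 = 1 / (norm N + 1)"
  define \<delta> where "\<delta> = min 1 (min (\<rho>\<^sub>0 / 2) (1 / (16 * L)))"
  have "0 < \<rho>\<^sub>0" unfolding \<rho>\<^sub>0_def by (simp add: add_nonneg_pos)
  have "\<delta> \<le> \<rho>\<^sub>0 / 2" "\<delta> \<le> 1 / (16 * L)" unfolding \<delta>_def by simp_all
  then have \<delta>: "0 < \<delta>" "\<delta> \<le> 1" "2 * \<delta> \<le> \<rho>\<^sub>0" "16 * \<delta> * L \<le> 1"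
    using \<open>L > 0\<close> \<open>0 < \<rho>\<^sub>0\<close> by (simp_all add: \<delta>_def le_divide_eq mult_ac)
  have bounded_min: "dyadic_power_bounded N (min (\<rho>\<^sub>0 + real k * \<delta>) \<rho>)" for k
  proof (induction k)
    case 0
    have "dyadic_power_bounded N \<rho>\<^sub>0"
      unfolding \<rho>\<^sub>0_def by (rule dyadic_power_bounded_inverse_norm)
    then show ?case
      by (rule dyadic_power_bounded_mono) (use \<open>0 \<le> \<rho>\<close> \<open>0 < \<rho>\<^sub>0\<close> in auto)
  next
    case (Suc k)
    define \<rho>' where "\<rho>' = \<rho>\<^sub>0 + real k * \<delta>"
    have Suc_eq: "\<rho>\<^sub>0 + real (Suc k) * \<delta> = \<rho>' + \<delta>"
      unfolding \<rho>'_def by (simp add: algebra_simps)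
    have "\<rho>\<^sub>0 \<le> \<rho>'" using \<delta>(1) by (simp add: \<rho>'_def)
    show ?case
    proof (cases "\<rho> \<le> \<rho>'")
      case True
      then have "min (\<rho>' + \<delta>) \<rho> = min \<rho>' \<rho>" using \<delta>(1) by simp
      then show ?thesis using Suc.IH unfolding Suc_eq \<rho>'_def by simp
    next
      case False
      then have "dyadic_power_bounded N \<rho>'" using Suc.IH unfolding \<rho>'_def by simp
      moreover have "L-lipschitz_on (cball 0 (\<rho>' + \<delta>)) (resolvent N)"
        using False \<delta>(2) by (intro lipschitz_on_subset[OF L] subset_cball) simp
      ultimately have "dyadic_power_bounded N (\<rho>' + \<delta>)"
        using \<delta> \<open>\<rho>\<^sub>0 \<le> \<rho>'\<close> by (intro dyadic_power_bounded_step[OF N]) simp_all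
      moreover have "0 \<le> min (\<rho>' + \<delta>) \<rho>" using \<delta>(1) \<open>0 < \<rho>\<^sub>0\<close> \<open>\<rho>\<^sub>0 \<le> \<rho>'\<close> \<open>0 \<le> \<rho>\<close> by simp
      ultimately show ?thesis
        unfolding Suc_eq by (rule dyadic_power_bounded_mono) simp
    qed
  qed
  obtain k where "\<rho> < real k * \<delta>" using reals_Archimedean3[OF \<delta>(1)] by blast
  then have "min (\<rho>\<^sub>0 + real k * \<delta>) \<rho> = \<rho>" using \<open>0 < \<rho>\<^sub>0\<close> by simp
  then show ?thesis using bounded_min[of k] by simp
qed

lemma quasinilpotent_power_dominated_eq_0:
  fixes N e :: "'a::complex_banach_algebra_1"
  assumes N: "quasinilpotent N" and "0 \<le> c"
    and dominated: "\<And>k. k \<ge> 1 \<Longrightarrow> norm e \<le> c ^ k * norm (N ^ k)"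
  shows "e = 0"
proof -
  obtain C where C: "\<forall>\<^sub>F m in sequentially. (c + 1) ^ 2 ^ m * norm (N ^ 2 ^ m) \<le> C"
    using quasinilpotent_dyadic_power_bounded[OF N, of "c + 1"] \<open>0 \<le> c\<close>
    unfolding dyadic_power_bounded_def by auto
  define q where "q = c / (c + 1)"
  have q: "0 \<le> q" "q < 1" "c = q * (c + 1)" using \<open>0 \<le> c\<close> by (simp_all add: q_def field_simps)
  have "\<forall>\<^sub>F m in sequentially. norm e \<le> q ^ 2 ^ m * C"
    using C
  proof (rule eventually_mono)
    fix m assume bound: "(c + 1) ^ 2 ^ m * norm (N ^ 2 ^ m) \<le> C"
    have "norm e \<le> c ^ 2 ^ m * norm (N ^ 2 ^ m)" by (rule dominated) simp
    also have "\<dots> = q ^ 2 ^ m * ((c + 1) ^ 2 ^ m * norm (N ^ 2 ^ m))"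
      by (subst q(3)) (simp add: power_mult_distrib)
    also have "\<dots> \<le> q ^ 2 ^ m * C" using bound q by (intro mult_left_mono) simp_all
    finally show "norm e \<le> q ^ 2 ^ m * C" .
  qed
  moreover have "(\<lambda>m. q ^ 2 ^ m * C) \<longlonglongrightarrow> 0"
    using q by (intro tendsto_mult_left_zero tendsto_power_two_power_zero)
  ultimately have "norm e \<le> 0"
    by (intro tendsto_le[OF trivial_limit_sequentially _ tendsto_const])
  then show ?thesis by simp
qed

section \<open>Generalized Drazin inverses\<close>

lemma power_mult_commuting:
  fixes a b :: "'a::monoid_mult"
  assumes "a * b = b * a"
  shows "(a * b) ^ n = a ^ n * b ^ n"
proof (induction n)
  case (Suc n)
  have "(a * b) ^ Suc n = a * (b * a ^ n) * b ^ n" using Suc by (simp add: mult.assoc)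
  also have "\<dots> = a * (a ^ n * b) * b ^ n"
    by (simp only: power_commuting_commutes[OF assms, symmetric])
  also have "\<dots> = a ^ Suc n * b ^ Suc n" by (simp only: mult.assoc power_Suc)
  finally show ?case .
qed simp

lemma idempotent_power:
  fixes e :: "'a::monoid_mult"
  assumes "e * e = e" "k \<ge> 1"
  shows "e ^ k = e"
  using assms(2) by (induction k rule: dec_induct) (simp_all add: assms(1))

lemma gd_complement_power:
  fixes a y :: "'a::complex_banach_algebra_1"
  assumes y: "y * a * y = y" "a * y = y * a" and k: "k \<ge> 1"
  shows "(a - a ^ 2 * y) ^ k = a ^ k * (1 - a * y)" "(a - a ^ 2 * y) ^ k = (1 - a * y) * a ^ k"
proof -
  have "a * y * (a * y) = a * y" using y(1) by (simp only: mult.assoc[symmetric]) (simp only: mult.assoc)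
  then have idem: "(1 - a * y) * (1 - a * y) = 1 - a * y"
    by (simp add: left_diff_distrib right_diff_distrib)
  have "a * (a * y) = a * y * a" by (metis y(2) mult.assoc)
  then have comm: "a * (1 - a * y) = (1 - a * y) * a"
    by (simp add: left_diff_distrib right_diff_distrib)
  have "a - a ^ 2 * y = a * (1 - a * y)"
    by (simp add: power2_eq_square right_diff_distrib mult.assoc)
  then show "(a - a ^ 2 * y) ^ k = a ^ k * (1 - a * y)" "(a - a ^ 2 * y) ^ k = (1 - a * y) * a ^ k"
    using power_mult_commuting[OF comm, of k] idempotent_power[OF idem k]
      power_commuting_commutes[OF comm, of k]
    by (simp_all add: comm)
qed

lemma gd_idempotents_orthogonal:
  fixes a x y :: "'a::complex_banach_algebra_1"
  assumes x: "x * a * x = x" "a * x = x * a" and y: "is_gd_inverse a y"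
  shows "a * x * (1 - a * y) = 0" "(1 - a * y) * (a * x) = 0"
proof -
  define N where "N = a - a ^ 2 * y"
  have N: "quasinilpotent N" and y': "y * a * y = y" "a * y = y * a"
    using y unfolding is_gd_inverse_def N_def by auto
  have "a * x * (a * x) = a * x" using x by (metis mult.assoc)
  then have p: "x ^ k * a ^ k = a * x" "a ^ k * x ^ k = a * x" if "k \<ge> 1" for k
    using power_mult_commuting[OF x(2)] power_mult_commuting[OF x(2)[symmetric]]
      idempotent_power[OF _ that] x(2) by metis+
  have eq: "a * x * (1 - a * y) = x ^ k * N ^ k" "(1 - a * y) * (a * x) = N ^ k * x ^ k" if "k \<ge> 1" for k
  proof -
    have "a * x * (1 - a * y) = x ^ k * a ^ k * (1 - a * y)"
      "(1 - a * y) * (a * x) = (1 - a * y) * (a ^ k * x ^ k)"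
      using p[OF that] by simp_all
    then have "a * x * (1 - a * y) = x ^ k * (a ^ k * (1 - a * y))"
      and "(1 - a * y) * (a * x) = (1 - a * y) * a ^ k * x ^ k"
      by (simp_all only: mult.assoc)
    then show "a * x * (1 - a * y) = x ^ k * N ^ k" "(1 - a * y) * (a * x) = N ^ k * x ^ k"
      unfolding N_def gd_complement_power(1)[OF y' that, symmetric]
        gd_complement_power(2)[OF y' that, symmetric] by simp_all
  qed
  have le: "norm (x ^ k * N ^ k) \<le> norm x ^ k * norm (N ^ k)"
    "norm (N ^ k * x ^ k) \<le> norm x ^ k * norm (N ^ k)" for k
    using norm_mult_ineq[of "x ^ k" "N ^ k"] norm_mult_ineq[of "N ^ k" "x ^ k"]
      mult_right_mono[OF norm_power_ineq[of x k] norm_ge_zero[of "N ^ k"]]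
    by (simp_all add: mult.commute)
  show "a * x * (1 - a * y) = 0" "(1 - a * y) * (a * x) = 0"
    using eq le by (auto intro!: quasinilpotent_power_dominated_eq_0[OF N norm_ge_zero])
qed

lemma is_gd_inverse_unique:
  fixes a x y :: "'a::complex_banach_algebra_1"
  assumes x: "is_gd_inverse a x" and y: "is_gd_inverse a y"
  shows "x = y"
proof -
  have xax: "x * a * x = x" "a * x = x * a" and yay: "y * a * y = y" "a * y = y * a"
    using x y unfolding is_gd_inverse_def by auto
  have "a * x = a * x * (a * y)" "a * y = a * x * (a * y)"
    using gd_idempotents_orthogonal(1)[OF xax y] gd_idempotents_orthogonal(2)[OF yay x]
    by (simp_all add: right_diff_distrib left_diff_distrib)
  then have p: "a * x = a * y" by simp
  have "x = x * (a * x)" using xax by (simp add: mult.assoc)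
  also have "\<dots> = x * a * y" unfolding p by (simp add: mult.assoc)
  also have "\<dots> = a * y * y" using xax p by simp
  also have "\<dots> = y" using yay by simp
  finally show ?thesis .
qed

lemma is_gd_inverseI_power:
  fixes a x :: "'a::complex_banach_algebra_1"
  assumes x: "x * a * x = x" "a * x = x * a" and u: "quasinilpotent (a - a ^ k * x)"
  shows "is_gd_inverse a x"
proof -
  define p where "p = a * x"
  have pp: "p * p = p" and xp: "x * p = x" and px: "p * x = x" and pa: "p * a = a * p"
    unfolding p_def using x by (metis mult.assoc)+
  have pak: "p * a ^ k = a ^ k * p"
    using power_commuting_commutes[OF pa[symmetric]] by simp
  have up: "(a - a ^ k * x) * p = a * p - a ^ k * x" using xp by (simp add: left_diff_distrib mult.assoc)
  moreover have "p * (a ^ k * x) = a ^ k * x" by (metis pak px mult.assoc)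
  then have "p * (a - a ^ k * x) = a * p - a ^ k * x"
    using pa by (simp add: right_diff_distrib)
  ultimately have "quasinilpotent ((a - a ^ k * x) * (1 - p))"
    using quasinilpotent_mult_complement[OF u pp] by simp
  moreover have "(a - a ^ k * x) * (1 - p) = a - a ^ 2 * x"
    using up by (simp add: right_diff_distrib p_def power2_eq_square mult.assoc)
  ultimately show ?thesis unfolding is_gd_inverse_def using x by simp
qed

theorem proposition2p1:
  fixes a x :: "'a::complex_banach_algebra_1"
  assumes "is_gpi_hirano_inverse a x"
  shows "gd_invertible a \<and> gd_inverse a = x"
proof -
  have gd: "is_gd_inverse a x"
    using assms unfolding is_gpi_hirano_inverse_def by (blast intro: is_gd_inverseI_power)
  then have "gd_inverse a = x"
    unfolding gd_inverse_def using is_gd_inverse_unique by blast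
  with gd show ?thesis unfolding gd_invertible_def by blast
qed

end
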